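(* Let $F$ be the elementary cellular automaton with rule number 28. For every nonempty finite word $u\in\{0,1\}^*$, the deterministic communication complexity of $\textsc{SInv}_{F,u}$ restricted to inputs of length $n$ is bounded by a constant independent of $n$.
   Context: An elementary cellular automaton (ECA) with rule number $N\in\{0,\dots,255\}$ is the map $F:\{0,1\}^{\mathbb Z}\to\{0,1\}^{\mathbb Z}$ given by $F(x)_i=f(x_{i-1},x_i,x_{i+1})$. Here the local rule $f:\{0,1\}^3\to\{0,1\}$ is determined by $N=\sum_{a,b,c\in\{0,1\}}2^{4a+2b+c}f(a,b,c)$. For a nonempty finite word $u$, $p_u\in\{0,1\}^{\mathbb Z}$ is defined by $(p_u)_i=u_{i\bmod |u|}$. For a finite word $x$, $p_u[x]$ is the configuration equal to $x$ on positions $0,\dots,|x|-1$ and to $p_u$ elsewhere. $\textsc{SInv}_{F,u}$ is the decision problem: on input a finite word $x$, decide whether there is an integer $w$ such that for all $t\ge0$ the set of positions where $F^t(p_u)$ and $F^t(p_u[x])$ differ is contained in an interval of length $w$. For each $n$, it is regarded as a function $\{0,1\}^n\to\{0,1\}$. For a function $g:X\times Y\to Z$, $D(g)$ is the minimal depth of a deterministic two-party protocol computing $g$. In such a protocol, Alice knows $x$ and Bob knows $y$. The protocol is a binary tree: each internal node is labelled by a function of Alice's input only or of Bob's input only, with values in $\{\text{left},\text{right}\}$, and each leaf is labelled by an output value. For $g:\{0,1\}^m\to Z$, set $D(g)=\max_{0\le i<m}D(g_i)$, where $g_i:\{0,1\}^i\times\{0,1\}^{m-i}\to Z$ is $g_i(x,y)=g(xy)$.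 *)

theory Defs
  imports Main
begin

text \<open>Configurations in {0,1}^Z are modelled as int => bool (True = 1).
  Finite words are bool lists.\<close>

type_synonym config = "int \<Rightarrow> bool"

definition b2n :: "bool \<Rightarrow> nat" where
  "b2n b = (if b then 1 else 0)"

definition eca_local :: "nat \<Rightarrow> bool \<Rightarrow> bool \<Rightarrow> bool \<Rightarrow> bool" where
  "eca_local N a b c = odd (N div 2 ^ (4 * b2n a + 2 * b2n b + b2n c))"

definition eca :: "nat \<Rightarrow> config \<Rightarrow> config" where
  "eca N x = (\<lambda>i. eca_local N (x (i - 1)) (x i) (x (i + 1)))"

definition periodic :: "bool list \<Rightarrow> config" where
  "periodic u = (\<lambda>i. u ! nat (i mod int (length u)))"

definition patch :: "bool list \<Rightarrow> bool list \<Rightarrow> config" where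
  "patch u x = (\<lambda>i. if 0 \<le> i \<and> i < int (length x) then x ! nat i else periodic u i)"

definition SInv :: "nat \<Rightarrow> bool list \<Rightarrow> bool list \<Rightarrow> bool" where
  "SInv N u x = (\<exists>w::nat. \<forall>t::nat. \<exists>a::int.
     {i. (eca N ^^ t) (periodic u) i \<noteq> (eca N ^^ t) (patch u x) i} \<subseteq> {a..<a + int w})"

datatype ('a, 'b, 'z) protocol =
    Leaf 'z
  | AliceNode "'a \<Rightarrow> bool" "('a, 'b, 'z) protocol" "('a, 'b, 'z) protocol"
  | BobNode "'b \<Rightarrow> bool" "('a, 'b, 'z) protocol" "('a, 'b, 'z) protocol"

fun run :: "('a, 'b, 'z) protocol \<Rightarrow> 'a \<Rightarrow> 'b \<Rightarrow> 'z" where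
  "run (Leaf z) x y = z"
| "run (AliceNode f l r) x y = (if f x then run l x y else run r x y)"
| "run (BobNode f l r) x y = (if f y then run l x y else run r x y)"

fun depth :: "('a, 'b, 'z) protocol \<Rightarrow> nat" where
  "depth (Leaf z) = 0"
| "depth (AliceNode f l r) = Suc (max (depth l) (depth r))"
| "depth (BobNode f l r) = Suc (max (depth l) (depth r))"

definition D_split :: "(bool list \<Rightarrow> 'z) \<Rightarrow> nat \<Rightarrow> nat \<Rightarrow> nat" where
  "D_split g m i = (LEAST d. \<exists>P :: (bool list, bool list, 'z) protocol. depth P = d \<and>
      (\<forall>x y. length x = i \<longrightarrow> length y = m - i \<longrightarrow> run P x y = g (x @ y)))"

definition D :: "(bool list \<Rightarrow> 'z) \<Rightarrow> nat \<Rightarrow> nat" where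
  "D g m = Max (insert 0 {D_split g m i | i. i < m})"

end

theory Submission
  imports Defs
begin

text \<open>
  Rule 28 acts by  F(x)_i = (if x_(i-1) then \<not>x_i \<and> \<not>x_(i+1) else x_i).
  The pattern 01 at positions i-1, i (a "wall" at i) is never destroyed, and it
  separates the dynamics: cells at or right of i-1 evolve independently of the cells
  left of them, and cells at or left of i evolve independently of the cells right of i.
  Hence, if the background p_u contains both letters, p_u has walls on both sides of
  the patch and every patch x is stably invariant.  If p_u is constantly 0 (resp. 1),
  then the orbit of p_u is 0 (from time 1 on), and a patch containing a 1 (resp. a 0)
  produces a finite nonzero configuration whose leftmost 1 is a wall that never moves,
  while its rightmost 1 moves right at speed one; so the difference is unbounded.
  In all cases SInv_{28,u}(x) says "every letter of x satisfies R" for a fixed R, and a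
  two-bit protocol (Alice and Bob each announce whether their part satisfies R)
  computes it.
\<close>

lemma eca_local_28: "eca_local 28 a b c = (if a then \<not> b \<and> \<not> c else b)"
  by (cases a; cases b; cases c) (simp_all add: eca_local_def b2n_def)

lemma eca28: "eca 28 x i = (if x (i - 1) then \<not> x i \<and> \<not> x (i + 1) else x i)"
  by (simp add: eca_def eca_local_28)

lemma eca28_zero_fixed: "(eca 28 ^^ t) (\<lambda>_. False) = (\<lambda>_. False)"
  by (induction t) (auto simp: eca28 fun_eq_iff)

lemma eca28_one: "eca 28 (\<lambda>_. True) = (\<lambda>_. False)"
  by (simp add: fun_eq_iff eca28)

section \<open>Walls\<close>

definition wall :: "config \<Rightarrow> int \<Rightarrow> bool" where
  "wall x i \<longleftrightarrow> \<not> x (i - 1) \<and> x i"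

lemma wall_persists: "wall x i \<Longrightarrow> wall ((eca 28 ^^ t) x) i"
  by (induction t) (auto simp: wall_def eca28)

lemma exists_wall:
  assumes "\<not> x a" "x b" "a \<le> b"
  shows "\<exists>i. wall x i"
proof (rule ccontr)
  assume "\<nexists>i. wall x i"
  then have step: "\<not> x i \<Longrightarrow> \<not> x (i + 1)" for i
    unfolding wall_def by (metis add_diff_cancel_right')
  have "\<not> x b" using \<open>a \<le> b\<close>
    by (induction b rule: int_ge_induct) (use assms(1) step in auto)
  then show False using assms(2) by simp
qed

text \<open>Right of a wall at w, the cells from w-1 on evolve on their own: cell w-1
  stays 0, and every further cell only sees cells from w-1 on.\<close>

lemma agree_right_of_wall_step:
  assumes "wall x w" "\<forall>j\<ge>w - 1. x j = y j"
  shows "\<forall>j\<ge>w - 1. eca 28 x j = eca 28 y j"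
proof (intro allI impI)
  fix j assume j: "j \<ge> w - 1"
  show "eca 28 x j = eca 28 y j"
  proof (cases "j = w - 1")
    case True
    then show ?thesis using assms by (auto simp: eca28 wall_def)
  next
    case False
    then show ?thesis using assms(2) j by (simp add: eca28)
  qed
qed

lemma agree_right_of_wall:
  assumes "wall x w" "\<forall>j\<ge>w - 1. x j = y j"
  shows "\<forall>j\<ge>w - 1. (eca 28 ^^ t) x j = (eca 28 ^^ t) y j"
proof (induction t)
  case 0 then show ?case using assms(2) by simp
next
  case (Suc t)
  show ?case using agree_right_of_wall_step[OF wall_persists[OF assms(1)] Suc] by simp
qed

text \<open>Left of a wall at w, the cells up to w evolve on their own: cell w stays 1,
  and every cell left of it only sees cells up to w.\<close>

lemma agree_left_of_wall_step:
  assumes "wall x w" "\<forall>j\<le>w. x j = y j"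
  shows "\<forall>j\<le>w. eca 28 x j = eca 28 y j"
proof (intro allI impI)
  fix j assume j: "j \<le> w"
  show "eca 28 x j = eca 28 y j"
  proof (cases "j = w")
    case True
    then show ?thesis using assms by (auto simp: eca28 wall_def)
  next
    case False
    then show ?thesis using assms(2) j by (simp add: eca28)
  qed
qed

lemma agree_left_of_wall:
  assumes "wall x w" "\<forall>j\<le>w. x j = y j"
  shows "\<forall>j\<le>w. (eca 28 ^^ t) x j = (eca 28 ^^ t) y j"
proof (induction t)
  case 0 then show ?case using assms(2) by simp
next
  case (Suc t)
  show ?case using agree_left_of_wall_step[OF wall_persists[OF assms(1)] Suc] by simp
qed

definition bounded_diff :: "nat \<Rightarrow> config \<Rightarrow> config \<Rightarrow> bool" where
  "bounded_diff N x y \<longleftrightarrow> (\<exists>w::nat. \<forall>t::nat. \<exists>a::int.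
     {i. (eca N ^^ t) x i \<noteq> (eca N ^^ t) y i} \<subseteq> {a..<a + int w})"

lemma SInv_iff_bounded_diff: "SInv N u x \<longleftrightarrow> bounded_diff N (periodic u) (patch u x)"
  by (simp add: SInv_def bounded_diff_def)

lemma bounded_diff_refl: "bounded_diff N x x"
  unfolding bounded_diff_def by (rule exI[of _ 0]) simp

lemma bounded_diff_step: "bounded_diff N x y \<Longrightarrow> bounded_diff N (eca N x) (eca N y)"
  unfolding bounded_diff_def by (metis funpow_Suc_right o_apply)

lemma walls_confine_diff:
  assumes "wall x l" "wall x r" "\<forall>j. j \<le> l \<or> r - 1 \<le> j \<longrightarrow> x j = y j"
  shows "bounded_diff 28 x y"
proof -
  have left: "\<forall>j\<le>l. x j = y j" and right: "\<forall>j\<ge>r - 1. x j = y j"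
    using assms(3) by auto
  have "{j. (eca 28 ^^ t) x j \<noteq> (eca 28 ^^ t) y j} \<subseteq> {l + 1..<r - 1}" for t
  proof
    fix j assume "j \<in> {j. (eca 28 ^^ t) x j \<noteq> (eca 28 ^^ t) y j}"
    then have "\<not> j \<le> l" "\<not> r - 1 \<le> j"
      using agree_left_of_wall[OF assms(1) left, of t] agree_right_of_wall[OF assms(2) right, of t]
      by auto
    then show "j \<in> {l + 1..<r - 1}" by simp
  qed
  moreover have "{l + 1..<r - 1} \<subseteq> {l + 1..<(l + 1) + int (nat (r - l))}" by auto
  ultimately show ?thesis unfolding bounded_diff_def by (meson order_trans)
qed

lemma rightmost_one_moves:
  assumes "q r" "\<forall>j>r. \<not> q j"
  shows "(eca 28 ^^ t) q (r + int t) \<and> (\<forall>j > r + int t. \<not> (eca 28 ^^ t) q j)"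
proof (induction t)
  case 0 then show ?case using assms by simp
next
  case (Suc t)
  let ?Q = "(eca 28 ^^ t) q"
  have "eca 28 ?Q (r + int t + 1)" using Suc eca28[of ?Q "r + int t + 1"] by simp
  moreover have "\<not> eca 28 ?Q j" if "j > r + int t + 1" for j
    using Suc that eca28[of ?Q j] by simp
  ultimately show ?case by (simp add: add.assoc add.commute[of 1])
qed

text \<open>A finite nonzero configuration never stays boundedly close to the zero orbit:
  its leftmost 1 is a fixed wall, its rightmost 1 escapes to the right.\<close>

lemma finite_support_unbounded:
  assumes "finite {j. q j}" "q j0"
  shows "\<not> bounded_diff 28 (\<lambda>_. False) q"
proof
  let ?S = "{j. q j}"
  have ne: "?S \<noteq> {}" using assms(2) by auto
  define l where "l = Min ?S"
  define r where "r = Max ?S"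
  have "q l" "q r" "l \<le> r" "\<forall>j>r. \<not> q j"
    using Min_in[OF assms(1) ne] Max_in[OF assms(1) ne] Min_le[OF assms(1)] Max_ge[OF assms(1)]
    unfolding l_def r_def by force+
  moreover have "\<not> q (l - 1)" using Min_le[OF assms(1), of "l - 1"] unfolding l_def by force
  ultimately have wl: "wall q l" and rq: "q r" "\<forall>j>r. \<not> q j" and "l \<le> r"
    by (simp_all add: wall_def)
  assume "bounded_diff 28 (\<lambda>_. False) q"
  then obtain w a where A: "{i. (eca 28 ^^ w) q i} \<subseteq> {a..<a + int w}"
    unfolding bounded_diff_def eca28_zero_fixed by force
  have "a \<le> l" using A wall_persists[OF wl, of w] by (auto simp: wall_def)
  moreover have "r + int w < a + int w" using A rightmost_one_moves[OF rq, of w] by auto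
  ultimately show False using \<open>l \<le> r\<close> by simp
qed

lemma periodic_shift: "u \<noteq> [] \<Longrightarrow> periodic u (i + int (length u) * m) = periodic u i"
  by (simp add: periodic_def)

lemma periodic_const:
  assumes "u \<noteq> []" "\<forall>v\<in>set u. v = c"
  shows "periodic u = (\<lambda>_. c)"
proof
  fix i
  have "nat (i mod int (length u)) < length u" using assms(1) by (simp add: nat_less_iff)
  then show "periodic u i = c" using assms(2) by (simp add: periodic_def)
qed

lemma patch_outside: "i < 0 \<or> int (length x) \<le> i \<Longrightarrow> patch u x i = periodic u i"
  by (auto simp: patch_def)

lemma patch_const:
  assumes "\<forall>v\<in>set x. v = c" "periodic u = (\<lambda>_. c)"
  shows "patch u x = periodic u"
  using assms by (auto simp: fun_eq_iff patch_def nat_less_iff)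

lemma patch_letter: "i < length x \<Longrightarrow> patch u x (int i) = x ! i"
  by (simp add: patch_def)

section \<open>SInv_{28,u} in the three cases\<close>

text \<open>If u contains both letters, p_u has walls on both sides of any patch.\<close>

lemma SInv_mixed:
  assumes "u \<noteq> []" "False \<in> set u" "True \<in> set u"
  shows "SInv 28 u x"
proof -
  let ?k = "int (length u)" and ?p = "periodic u" and ?n = "int (length x)"
  obtain a0 b0 where ab: "a0 < length u" "\<not> u ! a0" "b0 < length u" "u ! b0"
    using assms(2,3) by (metis (full_types) in_set_conv_nth)
  have "\<not> ?p (int a0)" "?p (int b0 + ?k * 1)"
    using ab periodic_shift[OF assms(1)] by (simp_all add: periodic_def)
  then obtain i where wi: "wall ?p i"
    using exists_wall[of ?p "int a0" "int b0 + ?k * 1"] ab by auto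
  have shift: "wall ?p (i + ?k * m)" for m
    using wi periodic_shift[OF assms(1), of "i - 1" m] periodic_shift[OF assms(1), of i m]
    by (simp add: wall_def algebra_simps)
  have k1: "1 \<le> ?k" using assms(1) by (simp add: Suc_le_eq)
  define l where "l = i + ?k * (- (\<bar>i\<bar> + 1))"
  define r where "r = i + ?k * (\<bar>i\<bar> + ?n + 1)"
  have "\<bar>i\<bar> + 1 \<le> ?k * (\<bar>i\<bar> + 1)" "\<bar>i\<bar> + ?n + 1 \<le> ?k * (\<bar>i\<bar> + ?n + 1)"
    using k1 by (auto simp: mult_le_cancel_right1)
  then have outside: "l < 0" "?n \<le> r - 1" unfolding l_def r_def by (auto simp: algebra_simps)
  have "?p j = patch u x j" if "j \<le> l \<or> r - 1 \<le> j" for j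
    using that outside patch_outside[of j x u] by auto
  then have "bounded_diff 28 ?p (patch u x)"
    using walls_confine_diff[of ?p l r "patch u x"] shift l_def r_def by blast
  then show ?thesis unfolding SInv_iff_bounded_diff .
qed

lemma SInv_zero_background:
  assumes "periodic u = (\<lambda>_. False)"
  shows "SInv 28 u x \<longleftrightarrow> (\<forall>v\<in>set x. \<not> v)"
proof
  assume S: "SInv 28 u x"
  show "\<forall>v\<in>set x. \<not> v"
  proof (rule ccontr)
    assume "\<not> (\<forall>v\<in>set x. \<not> v)"
    then obtain i0 where "i0 < length x" "x ! i0" by (metis in_set_conv_nth)
    then have one: "patch u x (int i0)" by (simp add: patch_letter)
    have "{j. patch u x j} \<subseteq> {0..<int (length x)}" using assms by (auto simp: patch_def)
    then have "finite {j. patch u x j}" using finite_subset by blast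
    then show False using finite_support_unbounded[of "patch u x", OF _ one] S assms
      by (simp add: SInv_iff_bounded_diff)
  qed
next
  assume "\<forall>v\<in>set x. \<not> v"
  then have "patch u x = periodic u" using patch_const[of x False u] assms by simp
  then show "SInv 28 u x" by (simp add: SInv_iff_bounded_diff bounded_diff_refl)
qed

text \<open>Over the one background only the all-one patch is stably invariant: after one
  step the background is zero and the patch has left a finite nonzero configuration.\<close>

lemma SInv_one_background:
  assumes "periodic u = (\<lambda>_. True)"
  shows "SInv 28 u x \<longleftrightarrow> (\<forall>v\<in>set x. v)"
proof
  assume S: "SInv 28 u x"
  show "\<forall>v\<in>set x. v"
  proof (rule ccontr)
    assume "\<not> (\<forall>v\<in>set x. v)"
    then obtain i0 where i0: "i0 < length x" "\<not> x ! i0" by (metis in_set_conv_nth)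
    let ?q = "patch u x"
    have "\<not> ?q (int i0)" "?q (int (length x))"
      using i0 assms by (simp_all add: patch_letter patch_outside)
    then obtain i where "wall ?q i" using exists_wall i0(1) by fastforce
    then have one: "eca 28 ?q i" using wall_persists[of ?q i 1] by (simp add: wall_def)
    have "\<not> eca 28 ?q j" if "j < 0 \<or> int (length x) < j" for j
      using that assms patch_outside[of _ x u] by (auto simp: eca28)
    then have "{j. eca 28 ?q j} \<subseteq> {0..int (length x)}" by force
    then have "finite {j. eca 28 ?q j}" using finite_subset by blast
    moreover have "bounded_diff 28 (\<lambda>_. False) (eca 28 ?q)"
      using bounded_diff_step[of 28 "periodic u" ?q] S assms eca28_one
      by (simp add: SInv_iff_bounded_diff)
    ultimately show False using finite_support_unbounded one by blast
  qed
next
  assume "\<forall>v\<in>set x. v"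
  then have "patch u x = periodic u" using patch_const[of x True u] assms by simp
  then show "SInv 28 u x" by (simp add: SInv_iff_bounded_diff bounded_diff_refl)
qed

lemma SInv28_letterwise:
  assumes "u \<noteq> []"
  shows "\<exists>R. SInv 28 u = (\<lambda>xs. \<forall>v\<in>set xs. R v)"
proof -
  consider "False \<in> set u \<and> True \<in> set u" | "False \<notin> set u" | "True \<notin> set u" by blast
  then show ?thesis
  proof cases
    case 1
    then have "SInv 28 u = (\<lambda>xs. \<forall>v\<in>set xs. True)"
      using SInv_mixed[OF assms] by auto
    then show ?thesis by blast
  next
    case 2
    then have "\<forall>v\<in>set u. v = True" by (metis (full_types))
    then have "periodic u = (\<lambda>_. True)" by (rule periodic_const[OF assms])
    then have "SInv 28 u = (\<lambda>xs. \<forall>v\<in>set xs. v)"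
      by (simp add: fun_eq_iff SInv_one_background)
    then show ?thesis by blast
  next
    case 3
    then have "\<forall>v\<in>set u. v = False" by (metis (full_types))
    then have "periodic u = (\<lambda>_. False)" by (rule periodic_const[OF assms])
    then have "SInv 28 u = (\<lambda>xs. \<forall>v\<in>set xs. \<not> v)"
      by (simp add: fun_eq_iff SInv_zero_background)
    then show ?thesis by blast
  qed
qed

section \<open>Communication complexity\<close>

lemma D_letterwise: "D (\<lambda>xs. \<forall>v\<in>set xs. R v) m \<le> 2"
proof -
  define P :: "(bool list, bool list, bool) protocol" where
    "P = AliceNode (\<lambda>x. \<forall>v\<in>set x. R v)
           (BobNode (\<lambda>y. \<forall>v\<in>set y. R v) (Leaf True) (Leaf False)) (Leaf False)"
  have "depth P = 2" "run P x y = (\<forall>v\<in>set (x @ y). R v)" for x y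
    unfolding P_def by auto
  then have "D_split (\<lambda>xs. \<forall>v\<in>set xs. R v) m i \<le> 2" for i
    unfolding D_split_def by (intro Least_le exI[of _ P]) simp
  then show ?thesis unfolding D_def by (auto intro: Max.boundedI)
qed

theorem mainTheorem6:
  fixes u :: "bool list"
  assumes "u \<noteq> []"
  shows "\<exists>C::nat. \<forall>n. D (SInv 28 u) n \<le> C"
proof -
  obtain R where "SInv 28 u = (\<lambda>xs. \<forall>v\<in>set xs. R v)"
    using SInv28_letterwise[OF assms] by blast
  then have "\<forall>n. D (SInv 28 u) n \<le> 2" using D_letterwise by simp
  then show ?thesis by blast
qed

end
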